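(* Let $\nu>2$, $\kappa\in(0,1/2-1/\nu)$, $C\ge0$ and $R,J:(0,\infty)\to[0,\infty)$, and define $\gamma(m,\delta)=C\,m\,(R(\delta)+J(\delta)m^{-\kappa})^2$ for $m\in\mathbb N$, $\delta>0$. Then: (i) For every $\delta>0$, the pair $(\nu/2,\gamma(\cdot,\delta))$ fulfills condition (S) with index $Q=2^{2\kappa}\in[1,2^{1-2/\nu})$. (ii) For every $\delta>0$, there is a constant $C'\ge0$ such that for each $0<\varepsilon\le1$, $\limsup_{n\to\infty}\gamma(\lfloor n\varepsilon\rfloor,\delta)/n\le C'\varepsilon$ (with the convention $\gamma(0,\delta)=0$). (iii) If $\lim_{\delta\downarrow0}R(\delta)=0$, then $\lim_{\delta\downarrow0}\limsup_{n\to\infty}\gamma(n,\delta)/n=0$.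
   Context: Condition (S): for $\alpha>1$ and $g:\mathbb N\to\mathbb R$, the pair $(\alpha,g)$ fulfills (S) with index $Q\in[1,2^{(\alpha-1)/\alpha})$ if (i) $g\ge0$, (ii) $g$ is nondecreasing, and (iii) $g(i)+g(j-i)\le Q g(j)$ for all $1\le i<j$. *)

theory Defs
  imports Complex_Main "HOL-Library.Extended_Real" "HOL-Library.Liminf_Limsup"
begin

text \<open>Condition (S) for a pair (alpha, g) with index Q. The domain of g is the positive
  integers {1,2,...}; the value g 0 is irrelevant.\<close>
definition cond_S :: "real \<Rightarrow> (nat \<Rightarrow> real) \<Rightarrow> real \<Rightarrow> bool" where
  "cond_S alpha g Q \<longleftrightarrow>
     alpha > 1 \<and> 1 \<le> Q \<and> Q < 2 powr ((alpha - 1) / alpha) \<and>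
     (\<forall>n\<ge>1. 0 \<le> g n) \<and>
     (\<forall>i j. 1 \<le> i \<longrightarrow> i \<le> j \<longrightarrow> g i \<le> g j) \<and>
     (\<forall>i j. 1 \<le> i \<longrightarrow> i < j \<longrightarrow> g i + g (j - i) \<le> Q * g j)"

definition gam :: "real \<Rightarrow> real \<Rightarrow> (real \<Rightarrow> real) \<Rightarrow> (real \<Rightarrow> real) \<Rightarrow> nat \<Rightarrow> real \<Rightarrow> real" where
  "gam C kappa R J m delta =
     (if m = 0 then 0 else C * real m * (R delta + J delta * (real m) powr (- kappa))^2)"

end

theory Submission
  imports Defs "HOL-Analysis.Convex"
begin

text \<open>Expanding the square writes \<open>\<gamma>(m,\<delta>)\<close> as a nonnegative combination of \<open>m\<close>,
  \<open>m\<^bsup>1-\<kappa>\<^esup>\<close> and \<open>m\<^bsup>1-2\<kappa>\<^esup>\<close>. Each power \<open>x\<^sup>p\<close> with \<open>0 \<le> p \<le> 1\<close> is nondecreasing and,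
  by concavity, satisfies \<open>a\<^sup>p + b\<^sup>p \<le> 2\<^bsup>1-p\<^esup> (a+b)\<^sup>p\<close>; the worst factor among the three
  exponents is \<open>2\<^bsup>2\<kappa>\<^esup>\<close>, which gives (i). Since \<open>m\<^bsup>-\<kappa>\<^esup> \<le> 1\<close>, \<open>\<gamma>(m,\<delta>)\<close> is at most linear in
  \<open>m\<close>, which gives (ii); and \<open>\<gamma>(n,\<delta>)/n \<rightarrow> C R(\<delta>)\<^sup>2\<close>, which gives (iii).\<close>

lemma powr_add_powr_le_two_powr:
  fixes a b p :: real
  assumes p: "0 \<le> p" "p \<le> 1" and ab: "0 < a" "0 < b"
  shows "a powr p + b powr p \<le> 2 powr (1 - p) * (a + b) powr p"
proof -
  define h where "h = (a + b) / 2"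
  have h: "0 < h" using ab by (simp add: h_def)
  have "a powr p * h powr (1 - p) \<le> p * a + (1 - p) * h"
    and "b powr p * h powr (1 - p) \<le> p * b + (1 - p) * h"
    using Youngs_inequality_0[of p "1 - p"] p ab h by auto
  then have "(a powr p + b powr p) * h powr (1 - p) \<le> 2 * h"
    by (simp add: h_def distrib_right field_simps)
  also have "\<dots> = 2 * h powr p * h powr (1 - p)"
    using h by (simp add: powr_add[symmetric])
  finally have "a powr p + b powr p \<le> 2 * h powr p"
    using h by simp
  also have "\<dots> = 2 powr (1 - p) * (a + b) powr p"
    using ab by (simp add: h_def powr_divide powr_diff)
  finally show ?thesis .
qed

lemma powr_add_powr_le:
  fixes a b p Q :: real
  assumes "0 \<le> p" "p \<le> 1" "2 powr (1 - p) \<le> Q" "0 < a" "0 < b"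
  shows "a powr p + b powr p \<le> Q * (a + b) powr p"
proof -
  have "a powr p + b powr p \<le> 2 powr (1 - p) * (a + b) powr p"
    using assms by (intro powr_add_powr_le_two_powr) auto
  also have "\<dots> \<le> Q * (a + b) powr p"
    using assms by (intro mult_right_mono) auto
  finally show ?thesis .
qed

lemma gam_eq_expanded:
  assumes "1 \<le> m"
  shows "gam C kappa R J m delta = C * ((R delta)\<^sup>2 * real m
           + 2 * R delta * J delta * real m powr (1 - kappa)
           + (J delta)\<^sup>2 * real m powr (1 - 2 * kappa))"
proof -
  have m: "0 < real m" using assms by simp
  have "real m * real m powr (- kappa) = real m powr (1 - kappa)"
    and "real m * (real m powr (- kappa))\<^sup>2 = real m powr (1 - 2 * kappa)"
    using m by (simp_all add: power2_eq_square powr_add[symmetric] powr_mult_base)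
  then show ?thesis
    using assms by (simp add: gam_def power2_eq_square algebra_simps)
qed

lemma gam_nonneg: "0 \<le> C \<Longrightarrow> 0 \<le> gam C kappa R J m delta"
  by (simp add: gam_def)

lemma gam_mono:
  assumes kappa: "0 \<le> kappa" "kappa \<le> 1/2" and C: "0 \<le> C"
    and RJ: "0 \<le> R delta" "0 \<le> J delta"
    and ij: "1 \<le> i" "i \<le> j"
  shows "gam C kappa R J i delta \<le> gam C kappa R J j delta"
proof -
  have r: "real i \<le> real j" "0 < real i" using ij by auto
  have "real i powr (1 - kappa) \<le> real j powr (1 - kappa)"
    and "real i powr (1 - 2 * kappa) \<le> real j powr (1 - 2 * kappa)"
    using r kappa by (auto intro: powr_mono2)
  then have "(R delta)\<^sup>2 * real i + 2 * R delta * J delta * real i powr (1 - kappa)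
              + (J delta)\<^sup>2 * real i powr (1 - 2 * kappa)
           \<le> (R delta)\<^sup>2 * real j + 2 * R delta * J delta * real j powr (1 - kappa)
              + (J delta)\<^sup>2 * real j powr (1 - 2 * kappa)"
    using r RJ by (intro add_mono mult_left_mono) auto
  then show ?thesis
    using C ij gam_eq_expanded[of i] gam_eq_expanded[of j] by (simp add: mult_left_mono)
qed

lemma gam_quasi_superadditive:
  assumes kappa: "0 \<le> kappa" "kappa \<le> 1/2" and C: "0 \<le> C"
    and RJ: "0 \<le> R delta" "0 \<le> J delta"
    and ij: "1 \<le> i" "i < j"
  shows "gam C kappa R J i delta + gam C kappa R J (j - i) delta
           \<le> 2 powr (2 * kappa) * gam C kappa R J j delta"
proof -
  define Q where "Q = (2::real) powr (2 * kappa)"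
  define F where "F x = (R delta)\<^sup>2 * x + 2 * R delta * J delta * x powr (1 - kappa)
                        + (J delta)\<^sup>2 * x powr (1 - 2 * kappa)" for x :: real
  have gam_F: "gam C kappa R J m delta = C * F (real m)" if "1 \<le> m" for m
    using gam_eq_expanded[OF that] by (simp add: F_def)
  define a where "a = real i"
  define b where "b = real (j - i)"
  have ab: "0 < a" "0 < b" "real j = a + b" using ij by (auto simp: a_def b_def)
  have "2 powr (1 - 1) \<le> Q" "2 powr (1 - (1 - kappa)) \<le> Q" "2 powr (1 - (1 - 2 * kappa)) \<le> Q"
    using kappa by (auto simp: Q_def intro: ge_one_powr_ge_zero powr_mono)
  then have "a + b \<le> Q * (a + b)"
    and "a powr (1 - kappa) + b powr (1 - kappa) \<le> Q * (a + b) powr (1 - kappa)"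
    and "a powr (1 - 2 * kappa) + b powr (1 - 2 * kappa) \<le> Q * (a + b) powr (1 - 2 * kappa)"
    using powr_add_powr_le[of 1 Q a b] powr_add_powr_le[of "1 - kappa" Q a b]
      powr_add_powr_le[of "1 - 2 * kappa" Q a b] ab kappa by auto
  then have "(R delta)\<^sup>2 * (a + b) + 2 * R delta * J delta * (a powr (1 - kappa) + b powr (1 - kappa))
              + (J delta)\<^sup>2 * (a powr (1 - 2 * kappa) + b powr (1 - 2 * kappa))
           \<le> (R delta)\<^sup>2 * (Q * (a + b)) + 2 * R delta * J delta * (Q * (a + b) powr (1 - kappa))
              + (J delta)\<^sup>2 * (Q * (a + b) powr (1 - 2 * kappa))"
    using RJ by (intro add_mono mult_left_mono) auto
  then have "F a + F b \<le> Q * F (a + b)"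
    by (simp add: F_def algebra_simps)
  then have "C * F a + C * F b \<le> Q * (C * F (a + b))"
    using C by (metis distrib_left mult.left_commute mult_left_mono)
  moreover have "gam C kappa R J i delta = C * F a"
    using gam_F[of i] ij by (simp add: a_def)
  moreover have "gam C kappa R J (j - i) delta = C * F b"
    using gam_F[of "j - i"] ij by (simp add: b_def)
  moreover have "gam C kappa R J j delta = C * F (a + b)"
    using gam_F[of j] ij by (simp add: ab(3))
  ultimately show ?thesis
    by (simp add: Q_def)
qed

lemma cond_S_gam:
  assumes alpha: "1 < alpha" "2 powr (2 * kappa) < 2 powr ((alpha - 1) / alpha)"
    and kappa: "0 \<le> kappa" "kappa \<le> 1/2" and C: "0 \<le> C"
    and RJ: "0 \<le> R delta" "0 \<le> J delta"
  shows "cond_S alpha (\<lambda>m. gam C kappa R J m delta) (2 powr (2 * kappa))"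
  unfolding cond_S_def
  using alpha kappa C RJ gam_nonneg gam_mono gam_quasi_superadditive ge_one_powr_ge_zero[of 2 "2 * kappa"]
  by auto

lemma gam_le_linear:
  assumes kappa: "0 \<le> kappa" and C: "0 \<le> C" and RJ: "0 \<le> R delta" "0 \<le> J delta"
  shows "gam C kappa R J m delta \<le> C * (R delta + J delta)\<^sup>2 * real m"
proof (cases "m = 0")
  case False
  have "real m powr (- kappa) \<le> real m powr 0"
    using False kappa by (intro powr_mono) auto
  then have "R delta + J delta * real m powr (- kappa) \<le> R delta + J delta"
    using False RJ by (simp add: mult_left_le)
  then have "(R delta + J delta * real m powr (- kappa))\<^sup>2 \<le> (R delta + J delta)\<^sup>2"
    using RJ by (intro power_mono) auto
  then have "C * real m * (R delta + J delta * real m powr (- kappa))\<^sup>2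
               \<le> C * real m * (R delta + J delta)\<^sup>2"
    using C by (intro mult_left_mono) auto
  then show ?thesis
    using False by (simp add: gam_def mult_ac)
qed (simp add: gam_def)

lemma limsup_gam_floor_le:
  assumes kappa: "0 \<le> kappa" and C: "0 \<le> C" and RJ: "0 \<le> R delta" "0 \<le> J delta"
    and eps: "0 \<le> eps"
  shows "limsup (\<lambda>n. ereal (gam C kappa R J (nat \<lfloor>real n * eps\<rfloor>) delta / real n))
           \<le> ereal (C * (R delta + J delta)\<^sup>2 * eps)"
proof (intro Limsup_bounded always_eventually allI)
  fix n :: nat
  define C' where "C' = C * (R delta + J delta)\<^sup>2"
  have C': "0 \<le> C'" using C by (simp add: C'_def)
  have "gam C kappa R J (nat \<lfloor>real n * eps\<rfloor>) delta \<le> C' * real (nat \<lfloor>real n * eps\<rfloor>)"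
    using gam_le_linear[of kappa C R delta J] kappa C RJ by (simp add: C'_def)
  also have "\<dots> \<le> C' * (real n * eps)"
    using C' eps by (intro mult_left_mono) auto
  finally have "gam C kappa R J (nat \<lfloor>real n * eps\<rfloor>) delta / real n \<le> C' * eps"
    using C' eps by (cases "n = 0") (auto simp: divide_le_eq mult_ac)
  then show "ereal (gam C kappa R J (nat \<lfloor>real n * eps\<rfloor>) delta / real n) \<le> ereal (C' * eps)"
    by simp
qed

lemma gam_div_tendsto:
  assumes kappa: "0 < kappa"
  shows "(\<lambda>n. gam C kappa R J n delta / real n) \<longlonglongrightarrow> C * (R delta)\<^sup>2"
proof -
  have "(\<lambda>n. real n powr (- kappa)) \<longlonglongrightarrow> 0"
    using kappa by (intro tendsto_neg_powr filterlim_real_sequentially) auto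
  then have "(\<lambda>n. C * (R delta + J delta * real n powr (- kappa))\<^sup>2) \<longlonglongrightarrow> C * (R delta + J delta * 0)\<^sup>2"
    by (intro tendsto_intros)
  moreover have "\<forall>\<^sub>F n in sequentially.
      C * (R delta + J delta * real n powr (- kappa))\<^sup>2 = gam C kappa R J n delta / real n"
    using eventually_gt_at_top[of 0] by eventually_elim (simp add: gam_def)
  ultimately show ?thesis
    by (simp add: Lim_transform_eventually)
qed

lemma limsup_gam_div:
  assumes "0 < kappa"
  shows "limsup (\<lambda>n. ereal (gam C kappa R J n delta / real n)) = ereal (C * (R delta)\<^sup>2)"
  using gam_div_tendsto[OF assms] by (intro lim_imp_Limsup tendsto_ereal) auto

theorem lemma2p5:
  fixes nu kappa C :: real and R J :: "real \<Rightarrow> real"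
  assumes nu: "nu > 2"
    and kappa: "0 < kappa" "kappa < 1/2 - 1/nu"
    and C: "C \<ge> 0"
    and RJ: "\<And>delta. delta > 0 \<Longrightarrow> R delta \<ge> 0 \<and> J delta \<ge> 0"
  shows "(\<forall>delta>0. cond_S (nu/2) (\<lambda>m. gam C kappa R J m delta) (2 powr (2*kappa))
                    \<and> 1 \<le> 2 powr (2*kappa) \<and> 2 powr (2*kappa) < 2 powr (1 - 2/nu))
       \<and> (\<forall>delta>0. \<exists>C'\<ge>0. \<forall>eps. 0 < eps \<and> eps \<le> 1 \<longrightarrow>
              limsup (\<lambda>n. ereal (gam C kappa R J (nat \<lfloor>real n * eps\<rfloor>) delta / real n))
                \<le> ereal (C' * eps))
       \<and> ((R \<longlongrightarrow> 0) (at_right 0) \<longrightarrow>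
            ((\<lambda>delta. limsup (\<lambda>n. ereal (gam C kappa R J n delta / real n)))
               \<longlongrightarrow> 0) (at_right 0))"
proof (intro conjI allI impI)
  have kappa_le: "kappa \<le> 1/2"
    using kappa(2) divide_pos_pos[of 1 nu] nu by linarith
  have Q_lt: "2 powr (2 * kappa) < 2 powr (1 - 2 / nu)"
    using kappa nu by (intro powr_less_mono) (auto simp: field_simps)
  moreover have "(nu / 2 - 1) / (nu / 2) = 1 - 2 / nu"
    using nu by (simp add: field_simps)
  ultimately show "cond_S (nu/2) (\<lambda>m. gam C kappa R J m delta) (2 powr (2*kappa))"
    and "1 \<le> 2 powr (2*kappa)" and "2 powr (2*kappa) < 2 powr (1 - 2/nu)"
    if "delta > 0" for delta
    using cond_S_gam[of "nu/2" kappa C R delta J] nu kappa kappa_le C RJ[OF that]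
    by (auto intro: ge_one_powr_ge_zero)
  show "\<exists>C'\<ge>0. \<forall>eps. 0 < eps \<and> eps \<le> 1 \<longrightarrow>
          limsup (\<lambda>n. ereal (gam C kappa R J (nat \<lfloor>real n * eps\<rfloor>) delta / real n)) \<le> ereal (C' * eps)"
    if "delta > 0" for delta
    using limsup_gam_floor_le[of kappa C R delta J] kappa C RJ[OF that]
    by (intro exI[of _ "C * (R delta + J delta)\<^sup>2"]) auto
  assume "(R \<longlongrightarrow> 0) (at_right 0)"
  then have "((\<lambda>delta. ereal (C * (R delta)\<^sup>2)) \<longlongrightarrow> ereal (C * 0\<^sup>2)) (at_right 0)"
    by (intro tendsto_ereal tendsto_intros)
  then show "((\<lambda>delta. limsup (\<lambda>n. ereal (gam C kappa R J n delta / real n))) \<longlongrightarrow> 0) (at_right 0)"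
    by (simp add: limsup_gam_div[OF kappa(1)] zero_ereal_def)
qed

end
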